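(* Consider the deep linear ResNet setting described in the context, and assume that for every $N\ge1$ and every $n\in\{1,\dots,N\}$ one has $\sqrt{\ell^N(0)}<\frac{m}{4\sqrt{2Me^3}}$ and $\|\theta_n^N(0)\|\le\frac14$. Suppose moreover that there exists $C_0>0$ independent of $n$ and $N$ such that $\|\theta_{n+1}^N(0)-\theta_n^N(0)\|\le\frac{C_0}{N}$ for all $N$ and $n\in\{1,\dots,N-1\}$. Then for all $N$, $n$ and all $t\ge0$, $\|\theta_n^N(t)\|<\frac12$, and $\theta_n^N(t)$ admits a limit as $t\to+\infty$. Moreover, there exists $C>0$ such that for all $N$, all $n\in\{1,\dots,N-1\}$ and all $t\ge0$, $\|\theta_{n+1}^N(t)-\theta_n^N(t)\|\le\frac CN$.
   Context: Let $d\ge1$, $\Sigma\in\mathbb{R}^{d\times d}$ symmetric positive definite with largest eigenvalue $M>0$ and smallest eigenvalue $m>0$, and $B\in\mathbb{R}^{d\times d}$. For $A\in\mathbb{R}^{d\times d}$ put $\|A\|_\Sigma^2=\mathrm{Tr}(A\Sigma A^\top)$. For each integer $N\ge1$ and parameters $\theta_1^N,\dots,\theta_N^N\in\mathbb{R}^{d\times d}$, let $\Pi^N=(I_d+\frac{\theta_N^N}{N})\cdots(I_d+\frac{\theta_1^N}{N})$ and $L(\theta_1^N,\dots,\theta_N^N)=\|\Pi^N-B\|_\Sigma^2$. The parameters evolve by the rescaled gradient flow $\frac{d\theta_n^N}{dt}(t)=-N\nabla_{\theta_n^N}L(\theta_1^N(t),\dots,\theta_N^N(t))$ for $t\ge0$,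 $n=1,\dots,N$, and $\ell^N(t)=L(\theta_1^N(t),\dots,\theta_N^N(t))$. $\|\cdot\|$ denotes the spectral (operator) norm of matrices. *)

theory Defs
  imports "HOL-Analysis.Analysis"
begin

type_synonym 'd mat = "real^'d^'d"

definition specnorm :: "'d::finite mat \<Rightarrow> real" where
  "specnorm A = onorm (\<lambda>x. A *v x)"

definition is_eigenvalue :: "'d::finite mat \<Rightarrow> real \<Rightarrow> bool" where
  "is_eigenvalue A lam \<longleftrightarrow> (\<exists>v. v \<noteq> 0 \<and> A *v v = lam *\<^sub>R v)"

definition sig_norm2 :: "'d::finite mat \<Rightarrow> 'd mat \<Rightarrow> real" where
  "sig_norm2 Sig A = trace (A ** Sig ** transpose A)"

text \<open>resprod N th k = (I + th k / N) ... (I + th 1 / N); Pi^N = resprod N th N.\<close>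
fun resprod :: "nat \<Rightarrow> (nat \<Rightarrow> 'd::finite mat) \<Rightarrow> nat \<Rightarrow> 'd mat" where
  "resprod N th 0 = mat 1"
| "resprod N th (Suc k) = (mat 1 + (1 / real N) *\<^sub>R th (Suc k)) ** resprod N th k"

definition lossL :: "'d::finite mat \<Rightarrow> 'd mat \<Rightarrow> nat \<Rightarrow> (nat \<Rightarrow> 'd mat) \<Rightarrow> real" where
  "lossL Sig B N th = sig_norm2 Sig (resprod N th N - B)"

definition is_gradient :: "('d::finite mat \<Rightarrow> real) \<Rightarrow> 'd mat \<Rightarrow> 'd mat \<Rightarrow> bool" where
  "is_gradient f x g \<longleftrightarrow> (f has_derivative (\<lambda>h. g \<bullet> h)) (at x)"

end

(*
  As long as every layer satisfies ||theta_n|| <= 1/2, a product of at most N - 1 of the factors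
  I + theta_k/N changes Frobenius norms by a factor between e^(-1/2) and e^(1/2). Hence each partial
  gradient is comparable to (2/N) ||(Pi - B) Sigma||, and since m L <= ||(Pi - B) Sigma||^2 <= M L
  (the extrema of the Rayleigh quotient of Sigma are eigenvalues) the loss satisfies the
  Polyak-Lojasiewicz inequality N sum_n ||grad_n||^2 >= (4m/e) L. So L decays like exp(-4mt/e)
  and every layer moves with speed at most 2 e^(1/2) sqrt(M L(t)); integrating, its total
  displacement is at most e^(3/2) sqrt(M L(0)) / m < 1/4. A continuity argument at the first time
  some layer reaches norm 1/2 shows that this never happens, and the exponentially decaying speed
  gives convergence. Consecutive gradients differ only through the two factors at positions n and
  n + 1, that is by O(||(Pi - B) Sigma|| / N^2), so theta_(n+1) - theta_n moves by at most 1/(4N).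
*)
theory Submission
  imports Defs
begin

section \<open>Spectral and Frobenius norms of matrices\<close>

lemma inner_matrix_eq_sum: "(A::real^'n::finite^'m::finite) \<bullet> B = (\<Sum>i\<in>UNIV. \<Sum>j\<in>UNIV. A$i$j * B$i$j)"
  by (simp add: inner_vec_def)

lemma norm_vec_sq: "(norm (x::'a::real_inner^'n::finite))^2 = (\<Sum>i\<in>UNIV. (norm (x$i))^2)"
  by (simp add: power2_norm_eq_inner inner_vec_def)

lemma row_matrix_mult: "((A::real^'n::finite^'m::finite) ** B) $ i = transpose B *v (A $ i)"
  by (simp add: vec_eq_iff matrix_matrix_mult_def matrix_vector_mult_def transpose_def mult.commute)

lemma norm_transpose_matrix: "norm (transpose (A::real^'n::finite^'m::finite)) = norm A"
proof -
  have "(norm (transpose A))^2 = (norm A)^2"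
    unfolding norm_vec_sq by (simp add: transpose_def, subst sum.swap, simp)
  then show ?thesis by (simp add: power2_eq_iff_nonneg)
qed

lemma specnorm_nonneg: "0 \<le> specnorm A"
  unfolding specnorm_def by (rule onorm_pos_le) simp

lemma norm_mult_vec_le_specnorm: "norm (A *v x) \<le> specnorm A * norm x"
  unfolding specnorm_def by (rule onorm) simp

lemma specnorm_le: "(\<And>x. norm (A *v x) \<le> c * norm x) \<Longrightarrow> specnorm A \<le> c"
  unfolding specnorm_def by (rule onorm_le)

lemma specnorm_mat_1_le: "specnorm (mat 1 :: 'n::finite mat) \<le> 1"
  by (rule specnorm_le) simp

lemma specnorm_scaleR: "specnorm (c *\<^sub>R A) = \<bar>c\<bar> * specnorm A"
  unfolding specnorm_def scaleR_matrix_vector_assoc[symmetric] by (simp add: onorm_scaleR)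

lemma specnorm_add_le: "specnorm (A + B) \<le> specnorm A + specnorm B"
  unfolding specnorm_def matrix_vector_mult_add_rdistrib by (rule onorm_triangle) simp_all

lemma specnorm_mult_le: "specnorm (A ** B) \<le> specnorm A * specnorm B"
  unfolding specnorm_def matrix_vector_mul_assoc[symmetric]
  using onorm_compose[of "(*v) A" "(*v) B"] by (simp add: o_def)

lemma specnorm_transpose_le: "specnorm (transpose A) \<le> specnorm (A::'n::finite mat)"
proof (rule specnorm_le)
  fix v :: "real^'n"
  let ?w = "transpose A *v v"
  have "(norm ?w)^2 = v \<bullet> (A *v ?w)"
    by (simp add: power2_norm_eq_inner dot_lmul_matrix)
  also have "\<dots> \<le> norm v * (specnorm A * norm ?w)"
    using Cauchy_Schwarz_ineq2[of v "A *v ?w"] norm_mult_vec_le_specnorm[of A ?w]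
    by (smt (verit) mult_left_mono norm_ge_zero)
  finally show "norm ?w \<le> specnorm A * norm v"
    by (cases "?w = 0") (simp_all add: specnorm_nonneg power2_eq_square mult_ac)
qed

lemma specnorm_transpose: "specnorm (transpose A) = specnorm A"
  using specnorm_transpose_le[of A] specnorm_transpose_le[of "transpose A"] by simp

lemma specnorm_le_norm: "specnorm A \<le> norm A"
proof (rule specnorm_le)
  fix x
  have "(norm (A *v x))^2 = (\<Sum>i\<in>UNIV. (A $ i \<bullet> x)^2)"
    by (simp add: norm_vec_sq matrix_vector_mul_component)
  also have "\<dots> \<le> (\<Sum>i\<in>UNIV. (norm (A $ i) * norm x)^2)"
    by (rule sum_mono) (metis Cauchy_Schwarz_ineq2 abs_ge_zero power2_abs power_mono)
  also have "\<dots> = (norm A * norm x)^2"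
    by (simp add: norm_vec_sq[of A] power_mult_distrib sum_distrib_right)
  finally show "norm (A *v x) \<le> norm A * norm x"
    by (rule power2_le_imp_le) simp
qed

lemma continuous_on_specnorm: "continuous_on S f \<Longrightarrow> continuous_on S (\<lambda>t. specnorm (f t))"
proof -
  have "1-lipschitz_on UNIV specnorm"
  proof (rule lipschitz_onI)
    fix X Y :: "'n::finite mat"
    have "specnorm X \<le> specnorm Y + specnorm (X - Y)" "specnorm Y \<le> specnorm X + specnorm (X - Y)"
      using specnorm_add_le[of Y "X - Y"] specnorm_add_le[of X "Y - X"] specnorm_scaleR[of "-1" "X - Y"]
      by simp_all
    then show "dist (specnorm X) (specnorm Y) \<le> 1 * dist X Y"
      using specnorm_le_norm[of "X - Y"] by (simp add: dist_real_def dist_norm)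
  qed simp
  then have "continuous_on UNIV specnorm" by (rule lipschitz_on_continuous_on)
  then show "continuous_on S f \<Longrightarrow> continuous_on S (\<lambda>t. specnorm (f t))"
    using continuous_on_compose2 by blast
qed

lemma norm_matrix_mult_right_le: "norm (A ** B) \<le> norm A * specnorm (B::'n::finite mat)"
proof -
  have "(norm (A ** B))^2 \<le> (\<Sum>i\<in>UNIV. (specnorm B * norm (A $ i))^2)"
    unfolding norm_vec_sq[of "A ** B"] row_matrix_mult
    by (intro sum_mono power_mono)
      (use norm_mult_vec_le_specnorm[of "transpose B"] in \<open>simp_all add: specnorm_transpose mult.commute\<close>)
  also have "\<dots> = (norm A * specnorm B)^2"
    by (simp add: norm_vec_sq[of A] power_mult_distrib sum_distrib_left mult.commute)
  finally show ?thesis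
    by (rule power2_le_imp_le) (simp add: specnorm_nonneg)
qed

lemma norm_matrix_mult_left_le: "norm (A ** B) \<le> specnorm (A::'n::finite mat) * norm B"
  using norm_matrix_mult_right_le[of "transpose B" "transpose A"]
  by (simp add: matrix_transpose_mul[symmetric] norm_transpose_matrix specnorm_transpose mult.commute)

lemma norm_matrix_mult_transpose_ge:
  assumes "0 \<le> a" and "\<And>v. a * norm v \<le> norm (X *v v)"
  shows "a * norm Z \<le> norm (Z ** transpose (X::'n::finite mat))"
proof -
  have "(a * norm Z)^2 = (\<Sum>i\<in>UNIV. (a * norm (Z $ i))^2)"
    by (simp add: norm_vec_sq[of Z] power_mult_distrib sum_distrib_left)
  also have "\<dots> \<le> (norm (Z ** transpose X))^2"
    unfolding norm_vec_sq[of "Z ** transpose X"] row_matrix_mult transpose_transpose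
    by (intro sum_mono power_mono) (simp_all add: assms)
  finally show ?thesis by (rule power2_le_imp_le) simp
qed

lemma transpose_mat_1_add: "transpose (mat 1 + Y) = mat 1 + transpose Y"
  by (simp add: transpose_def vec_eq_iff mat_def)

lemma norm_mult_transpose_diff_le:
  "norm (Z ** transpose X - transpose Y ** Z) \<le> (specnorm X + specnorm Y) * norm (Z::'n::finite mat)"
  using norm_triangle_ineq4[of "Z ** transpose X" "transpose Y ** Z"]
    norm_matrix_mult_right_le[of Z "transpose X"] norm_matrix_mult_left_le[of "transpose Y" Z]
  by (simp add: specnorm_transpose algebra_simps)

lemma norm_matrix_mult_le: "norm (A ** B) \<le> norm A * norm (B::'n::finite mat)"
  using norm_matrix_mult_right_le[of A B] mult_left_mono[OF specnorm_le_norm[of B] norm_ge_zero[of A]]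
  by linarith

lemma bounded_bilinear_matrix_mult:
  "bounded_bilinear ((**) :: 'n::finite mat \<Rightarrow> 'n mat \<Rightarrow> 'n mat)"
proof
  fix a a' b b' :: "'n mat" and r :: real
  show "(a + a') ** b = a ** b + a' ** b"
    by (vector matrix_matrix_mult_def sum.distrib[symmetric] field_simps)
  show "a ** (b + b') = a ** b + a ** b'" by (rule matrix_add_ldistrib)
  show "(r *\<^sub>R a) ** b = r *\<^sub>R (a ** b)" by (rule scalar_matrix_assoc[symmetric])
  show "a ** (r *\<^sub>R b) = r *\<^sub>R (a ** b)" by (simp add: matrix_scalar_ac scalar_matrix_assoc)
next
  show "\<exists>K. \<forall>a b :: 'n mat. norm (a ** b) \<le> norm a * norm b * K"
    using norm_matrix_mult_le by (intro exI[of _ 1]) auto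
qed

lemmas matrix_mult_add_left = bounded_bilinear.add_left[OF bounded_bilinear_matrix_mult]
lemmas matrix_scaleR_left = bounded_bilinear.scaleR_left[OF bounded_bilinear_matrix_mult]
lemmas matrix_scaleR_right = bounded_bilinear.scaleR_right[OF bounded_bilinear_matrix_mult]

lemma inner_transpose_matrix: "transpose (A::real^'n::finite^'m::finite) \<bullet> transpose B = A \<bullet> B"
  unfolding inner_matrix_eq_sum transpose_def by (simp, subst sum.swap, simp)

lemma inner_matrix_mult_right: "(P::'n::finite mat) \<bullet> (Z ** C) = (P ** transpose C) \<bullet> Z"
  by (simp add: inner_matrix_eq_sum matrix_matrix_mult_def transpose_def sum_distrib_left
      sum_distrib_right mult_ac, rule sum.cong, simp, subst sum.swap, simp)

lemma inner_matrix_mult_left: "(P::'n::finite mat) \<bullet> (A ** Z) = (transpose A ** P) \<bullet> Z"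
proof -
  have "P \<bullet> (A ** Z) = transpose P \<bullet> (transpose Z ** transpose A)"
    by (subst inner_transpose_matrix[symmetric]) (simp add: matrix_transpose_mul)
  also have "\<dots> = transpose (transpose A ** P) \<bullet> transpose Z"
    by (simp add: inner_matrix_mult_right matrix_transpose_mul)
  finally show ?thesis by (simp only: inner_transpose_matrix)
qed

section \<open>Extremal eigenvalues and the Rayleigh quotient\<close>

lemma inner_symmetric_matrix:
  assumes "transpose S = S"
  shows "x \<bullet> (S *v y) = y \<bullet> (S *v (x::real^'n::finite))"
proof -
  have "x \<bullet> (S *v y) = (transpose S *v x) \<bullet> y"
    by (simp add: dot_lmul_matrix)
  then show ?thesis by (simp add: assms inner_commute)
qed

lemma quadratic_nonpos_imp_nonpos:
  fixes k q :: real
  assumes "\<And>s. s > 0 \<Longrightarrow> 2 * s * k + s^2 * q \<le> 0"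
  shows "k \<le> 0"
proof (rule ccontr)
  assume "\<not> k \<le> 0"
  define s where "s = k / (\<bar>q\<bar> + 1)"
  have s: "s > 0" "s * \<bar>q\<bar> \<le> k"
    using \<open>\<not> k \<le> 0\<close> by (auto simp: s_def field_simps)
  have "0 < s * k" using s \<open>\<not> k \<le> 0\<close> by simp
  also have "s * k \<le> s * (2 * k - s * \<bar>q\<bar>)" using s by (intro mult_left_mono) auto
  also have "\<dots> \<le> 2 * s * k + s^2 * q"
    using mult_nonneg_nonneg[of "s^2" "q + \<bar>q\<bar>"] by (simp add: power2_eq_square algebra_simps)
  finally show False using assms[OF s(1)] by simp
qed

lemma symmetric_nonpos_form_null:
  fixes T :: "'n::finite mat"
  assumes sym: "transpose T = T" and nonpos: "\<And>x. x \<bullet> (T *v x) \<le> 0"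
    and null: "v \<bullet> (T *v v) = 0"
  shows "T *v v = 0"
proof -
  let ?w = "T *v v"
  have "2 * s * (norm ?w)^2 + s^2 * (?w \<bullet> (T *v ?w)) \<le> 0" for s
  proof -
    have "(v + s *\<^sub>R ?w) \<bullet> (T *v (v + s *\<^sub>R ?w)) = 2 * s * (norm ?w)^2 + s^2 * (?w \<bullet> (T *v ?w))"
      using inner_symmetric_matrix[OF sym, of v ?w] null
      by (simp add: matrix_vector_right_distrib matrix_vector_mult_scaleR inner_add_left
          inner_add_right power2_norm_eq_inner power2_eq_square[of s] algebra_simps)
    then show ?thesis using nonpos[of "v + s *\<^sub>R ?w"] by simp
  qed
  then have "(norm ?w)^2 \<le> 0" by (rule quadratic_nonpos_imp_nonpos)
  then show ?thesis by simp
qed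

lemma eigenvector_of_extremal_form:
  fixes S :: "'n::finite mat"
  assumes sym: "transpose S = S" and posdef: "\<forall>x. x \<noteq> 0 \<longrightarrow> x \<bullet> (S *v x) > 0"
    and extremal: "\<And>x. \<sigma> * (norm (S *v x))^2 \<le> \<sigma> * \<rho> * (x \<bullet> (S *v x))"
    and attained: "(norm (S *v v))^2 = \<rho> * (v \<bullet> (S *v v))" and "\<sigma> \<noteq> 0"
  shows "S *v v = \<rho> *\<^sub>R v"
proof -
  define T where "T = \<sigma> *\<^sub>R (S ** S - \<rho> *\<^sub>R S)"
  have form: "x \<bullet> (T *v x) = \<sigma> * ((norm (S *v x))^2 - \<rho> * (x \<bullet> (S *v x)))" for x
    using inner_symmetric_matrix[OF sym, of x "S *v x"]
    by (simp add: T_def matrix_vector_mult_diff_rdistrib scaleR_matrix_vector_assoc[symmetric]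
        matrix_vector_mul_assoc[symmetric] power2_norm_eq_inner inner_diff_right algebra_simps)
  have "transpose (S ** S - \<rho> *\<^sub>R S) = transpose (S ** S) - \<rho> *\<^sub>R transpose S"
    by (simp add: transpose_def vec_eq_iff)
  then have "transpose T = T"
    by (simp add: T_def transpose_scalar matrix_transpose_mul sym)
  moreover have "x \<bullet> (T *v x) \<le> 0" for x
    unfolding form using extremal[of x] by (simp add: right_diff_distrib mult.assoc)
  moreover have "v \<bullet> (T *v v) = 0"
    unfolding form attained by simp
  ultimately have "T *v v = 0"
    by (rule symmetric_nonpos_form_null)
  then have "S *v (S *v v - \<rho> *\<^sub>R v) = 0"
    using \<open>\<sigma> \<noteq> 0\<close> by (simp add: T_def matrix_vector_mult_diff_rdistrib matrix_vector_mult_diff_distrib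
        scaleR_matrix_vector_assoc[symmetric] matrix_vector_mul_assoc[symmetric] matrix_vector_mult_scaleR)
  then have "S *v v - \<rho> *\<^sub>R v = 0"
    using posdef by (metis inner_zero_right less_irrefl)
  then show ?thesis by simp
qed

definition rayleigh :: "'n::finite mat \<Rightarrow> real^'n \<Rightarrow> real" where
  "rayleigh S x = (norm (S *v x))^2 / (x \<bullet> (S *v x))"

lemma rayleigh_scaleR: "c \<noteq> 0 \<Longrightarrow> rayleigh S (c *\<^sub>R x) = rayleigh S x"
  by (simp add: rayleigh_def matrix_vector_mult_scaleR power_mult_distrib) (simp add: power2_eq_square)

lemma extremal_rayleigh_eigenvalue:
  fixes S :: "'n::finite mat"
  assumes sym: "transpose S = S" and posdef: "\<forall>x. x \<noteq> 0 \<longrightarrow> x \<bullet> (S *v x) > 0"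
    and "\<sigma> \<noteq> 0"
  obtains \<rho> where "is_eigenvalue S \<rho>" "\<And>x. \<sigma> * (norm (S *v x))^2 \<le> \<sigma> * \<rho> * (x \<bullet> (S *v x))"
proof -
  have "continuous_on (sphere 0 1) (\<lambda>x. \<sigma> * rayleigh S x)"
    unfolding rayleigh_def
  proof (intro continuous_intros ballI)
    fix x :: "real^'n" assume "x \<in> sphere 0 1"
    then have "x \<noteq> 0" by auto
    then show "x \<bullet> (S *v x) \<noteq> 0" using posdef by force
  qed
  moreover have "sphere (0::real^'n) 1 \<noteq> {}"
    using vector_choose_size[of 1] by auto
  ultimately obtain v where v: "v \<in> sphere 0 1"
    and max: "\<And>y. y \<in> sphere 0 1 \<Longrightarrow> \<sigma> * rayleigh S y \<le> \<sigma> * rayleigh S v"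
    using continuous_attains_sup[OF compact_sphere] by blast
  have ratio: "(norm (S *v x))^2 = rayleigh S x * (x \<bullet> (S *v x))" if "x \<noteq> 0" for x
    using posdef[rule_format, OF that] by (simp add: rayleigh_def)
  have extremal: "\<sigma> * (norm (S *v x))^2 \<le> \<sigma> * rayleigh S v * (x \<bullet> (S *v x))" for x
  proof (cases "x = 0")
    case False
    have "\<sigma> * rayleigh S x \<le> \<sigma> * rayleigh S v"
      using max[of "x /\<^sub>R norm x"] rayleigh_scaleR[of "inverse (norm x)" S x] False by simp
    then show ?thesis
      using ratio[OF False] mult_right_mono[OF _ less_imp_le[OF posdef[rule_format, OF False]]]
      by (simp add: mult.assoc[symmetric])
  qed simp
  have "v \<noteq> 0" using v by auto
  then have "S *v v = rayleigh S v *\<^sub>R v"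
    by (intro eigenvector_of_extremal_form[OF sym posdef extremal ratio \<open>\<sigma> \<noteq> 0\<close>])
  with \<open>v \<noteq> 0\<close> have "is_eigenvalue S (rayleigh S v)"
    unfolding is_eigenvalue_def by blast
  with extremal show ?thesis using that by blast
qed

lemma quadratic_form_eigenvalue_bounds:
  fixes S :: "'n::finite mat"
  assumes sym: "transpose S = S" and posdef: "\<forall>x. x \<noteq> 0 \<longrightarrow> x \<bullet> (S *v x) > 0"
    and M_max: "\<forall>lam. is_eigenvalue S lam \<longrightarrow> lam \<le> M"
    and m_min: "\<forall>lam. is_eigenvalue S lam \<longrightarrow> m \<le> lam"
  shows "(norm (S *v v))^2 \<le> M * (v \<bullet> (S *v v))"
    and "m * (v \<bullet> (S *v v)) \<le> (norm (S *v v))^2"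
proof -
  have nonneg: "0 \<le> v \<bullet> (S *v v)"
    using posdef by (cases "v = 0") (auto intro: less_imp_le)
  obtain \<rho> where "is_eigenvalue S \<rho>" and "\<And>x. 1 * (norm (S *v x))^2 \<le> 1 * \<rho> * (x \<bullet> (S *v x))"
    using extremal_rayleigh_eigenvalue[OF sym posdef one_neq_zero] by blast
  then have "(norm (S *v v))^2 \<le> \<rho> * (v \<bullet> (S *v v))" and "\<rho> \<le> M"
    using M_max by auto
  then show "(norm (S *v v))^2 \<le> M * (v \<bullet> (S *v v))"
    using mult_right_mono[OF \<open>\<rho> \<le> M\<close> nonneg] by linarith
  have "-1 \<noteq> (0::real)" by simp
  obtain \<rho>' where "is_eigenvalue S \<rho>'" and "\<And>x. -1 * (norm (S *v x))^2 \<le> -1 * \<rho>' * (x \<bullet> (S *v x))"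
    using extremal_rayleigh_eigenvalue[OF sym posdef \<open>-1 \<noteq> 0\<close>] by blast
  then have "\<rho>' * (v \<bullet> (S *v v)) \<le> (norm (S *v v))^2" and "m \<le> \<rho>'"
    using m_min by auto
  then show "m * (v \<bullet> (S *v v)) \<le> (norm (S *v v))^2"
    using mult_right_mono[OF \<open>m \<le> \<rho>'\<close> nonneg] by linarith
qed

section \<open>The loss and its gradient\<close>

text \<open>The product of the factors with indices a+1, ..., a+j is written resprod N (\<lambda>k. th (a + k)) j.\<close>

lemma resprod_add: "resprod N th (j + i) = resprod N (\<lambda>k. th (j + k)) i ** resprod N th j"
  by (induction i) (simp_all add: matrix_mul_assoc)

lemma resprod_cong: "(\<And>k. 1 \<le> k \<Longrightarrow> k \<le> j \<Longrightarrow> th k = th' k) \<Longrightarrow> resprod N th j = resprod N th' j"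
  by (induction j) simp_all

lemma resprod_split:
  assumes "1 \<le> n" "n \<le> N"
  shows "resprod N th N =
    resprod N (\<lambda>k. th (n + k)) (N - n) ** (mat 1 + (1 / real N) *\<^sub>R th n) ** resprod N th (n - 1)"
proof -
  obtain n' where n': "n = Suc n'" using assms by (cases n) auto
  have "resprod N th N = resprod N (\<lambda>k. th (n + k)) (N - n) ** resprod N th n"
    using resprod_add[of N th n "N - n"] assms by simp
  then show ?thesis by (simp add: n' matrix_mul_assoc)
qed

definition residual_weight :: "'n::finite mat \<Rightarrow> 'n mat \<Rightarrow> nat \<Rightarrow> (nat \<Rightarrow> 'n mat) \<Rightarrow> 'n mat" where
  "residual_weight Sig B N th = (resprod N th N - B) ** Sig"

definition loss_grad :: "'n::finite mat \<Rightarrow> 'n mat \<Rightarrow> nat \<Rightarrow> (nat \<Rightarrow> 'n mat) \<Rightarrow> nat \<Rightarrow> 'n mat" where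
  "loss_grad Sig B N th n = (2 / real N) *\<^sub>R
     (transpose (resprod N (\<lambda>k. th (n + k)) (N - n)) ** residual_weight Sig B N th
       ** transpose (resprod N th (n - 1)))"

lemma lossL_eq_inner: "lossL Sig B N th = (resprod N th N - B) \<bullet> residual_weight Sig B N th"
  by (simp add: lossL_def sig_norm2_def residual_weight_def trace_def inner_matrix_eq_sum
      matrix_matrix_mult_def transpose_def sum_distrib_right mult.commute)

lemma inner_sandwich:
  fixes P A X C :: "'n::finite mat"
  shows "P \<bullet> (A ** X ** C) = (transpose A ** P ** transpose C) \<bullet> X"
  using inner_matrix_mult_right[of P "A ** X" C] inner_matrix_mult_left[of "P ** transpose C" A X]
  by (simp only: matrix_mul_assoc)

lemma loss_grad_Suc_diff:
  fixes Sig B :: "'n::finite mat" and th :: "nat \<Rightarrow> 'n mat"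
  assumes "1 \<le> n" "n < N"
  defines "Z \<equiv> transpose (resprod N (\<lambda>k. th (n + 1 + k)) (N - (n + 1))) ** residual_weight Sig B N th
    ** transpose (resprod N th (n - 1))"
  shows "loss_grad Sig B N th (n + 1) - loss_grad Sig B N th n
    = (2 / (real N)^2) *\<^sub>R (Z ** transpose (th n) - transpose (th (n + 1)) ** Z)"
proof -
  let ?F = "\<lambda>k. mat 1 + (1 / real N) *\<^sub>R th k"
  have "1 + (N - (n + 1)) = N - n" using assms by simp
  then have "resprod N (\<lambda>k. th (n + k)) (N - n)
      = resprod N (\<lambda>k. th (n + (1 + k))) (N - (n + 1)) ** resprod N (\<lambda>k. th (n + k)) 1"
    using resprod_add[of N "\<lambda>k. th (n + k)" 1 "N - (n + 1)"] by simp
  then have "resprod N (\<lambda>k. th (n + k)) (N - n) = resprod N (\<lambda>k. th (n + 1 + k)) (N - (n + 1)) ** ?F (n + 1)"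
    by (simp add: add_ac)
  then have "loss_grad Sig B N th n = (2 / real N) *\<^sub>R (transpose (?F (n + 1)) ** Z)"
    by (simp add: loss_grad_def Z_def matrix_transpose_mul matrix_mul_assoc)
  moreover have "resprod N th n = ?F n ** resprod N th (n - 1)"
    using assms by (cases n) simp_all
  then have "loss_grad Sig B N th (n + 1) = (2 / real N) *\<^sub>R (Z ** transpose (?F n))"
    by (simp add: loss_grad_def Z_def matrix_transpose_mul matrix_mul_assoc)
  ultimately show ?thesis
    by (simp add: transpose_mat_1_add transpose_scalar matrix_add_ldistrib matrix_mult_add_left
        matrix_scaleR_left matrix_scaleR_right power2_eq_square flip: scaleR_diff_right)
qed

lemma has_derivative_weighted_square:
  fixes Y :: "'a::real_normed_vector \<Rightarrow> 'n::finite mat"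
  assumes sym: "transpose Sig = Sig" and Y: "(Y has_derivative Y') (at x within s)"
  shows "((\<lambda>x. Y x \<bullet> (Y x ** Sig)) has_derivative (\<lambda>h. 2 * ((Y x ** Sig) \<bullet> Y' h))) (at x within s)"
proof -
  have "((\<lambda>x. Y x \<bullet> (Y x ** Sig)) has_derivative (\<lambda>h. Y x \<bullet> (Y x ** 0 + Y' h ** Sig) + Y' h \<bullet> (Y x ** Sig)))
      (at x within s)"
    by (intro has_derivative_inner Y bounded_bilinear.FDERIV[OF bounded_bilinear_matrix_mult] has_derivative_const)
  moreover have "Y x \<bullet> (Y' h ** Sig) = (Y x ** Sig) \<bullet> Y' h" for h
    using inner_matrix_mult_right[of "Y x" "Y' h" Sig] sym by simp
  ultimately show ?thesis by (simp add: inner_commute)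
qed

lemma is_gradient_loss_grad:
  fixes Sig B :: "'n::finite mat"
  assumes sym: "transpose Sig = Sig" and n: "1 \<le> n" "n \<le> N"
  shows "is_gradient (\<lambda>X. lossL Sig B N (th(n := X))) (th n) (loss_grad Sig B N th n)"
proof -
  let ?A = "resprod N (\<lambda>k. th (n + k)) (N - n)" and ?C = "resprod N th (n - 1)" and ?c = "1 / real N"
  define Y where "Y X = ?c *\<^sub>R (?A ** X ** ?C) + (?A ** ?C - B)" for X
  have "resprod N (th(n := X)) N = ?A ** (mat 1 + ?c *\<^sub>R X) ** ?C" for X
  proof -
    have "resprod N (\<lambda>k. (th(n := X)) (n + k)) (N - n) = ?A"
      by (rule resprod_cong) simp
    moreover have "resprod N (th(n := X)) (n - 1) = ?C"
      by (rule resprod_cong) (use n in \<open>simp add: le_diff_conv2\<close>)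
    ultimately show ?thesis using resprod_split[OF n, of "th(n := X)"] by simp
  qed
  then have resprod_upd: "resprod N (th(n := X)) N - B = Y X" for X
    by (simp add: Y_def matrix_add_ldistrib matrix_mult_add_left matrix_scaleR_left matrix_scaleR_right)
  have "bounded_linear (\<lambda>X. ?A ** X ** ?C)"
    using bounded_linear_compose[OF bounded_bilinear.bounded_linear_left[OF bounded_bilinear_matrix_mult]
        bounded_bilinear.bounded_linear_right[OF bounded_bilinear_matrix_mult]] .
  then have "bounded_linear (\<lambda>X. ?c *\<^sub>R (?A ** X ** ?C))"
    by (rule bounded_linear_compose[OF bounded_linear_scaleR_right])
  then have "(Y has_derivative (\<lambda>h. ?c *\<^sub>R (?A ** h ** ?C))) (at (th n))"
    unfolding Y_def[abs_def] by (rule has_derivative_add_const[OF bounded_linear.has_derivative[OF _ has_derivative_ident]])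
  then have "((\<lambda>X. Y X \<bullet> (Y X ** Sig)) has_derivative (\<lambda>h. 2 * ((Y (th n) ** Sig) \<bullet> (?c *\<^sub>R (?A ** h ** ?C)))))
      (at (th n))"
    by (rule has_derivative_weighted_square[OF sym])
  moreover have "2 * ((Y (th n) ** Sig) \<bullet> (?c *\<^sub>R (?A ** h ** ?C))) = loss_grad Sig B N th n \<bullet> h" for h
    using resprod_upd[of "th n"]
    by (simp add: loss_grad_def residual_weight_def inner_sandwich)
  ultimately show ?thesis
    by (simp add: is_gradient_def lossL_eq_inner residual_weight_def resprod_upd)
qed

lemma resprod_has_vector_derivative:
  fixes Th :: "nat \<Rightarrow> real \<Rightarrow> 'n::finite mat"
  assumes "\<And>k. 1 \<le> k \<Longrightarrow> k \<le> j \<Longrightarrow> (Th k has_vector_derivative Th' k) (at t within S)"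
  shows "((\<lambda>t. resprod N (\<lambda>k. Th k t) j) has_vector_derivative
    (\<Sum>n=1..j. resprod N (\<lambda>k. Th (n + k) t) (j - n) ** ((1 / real N) *\<^sub>R Th' n)
      ** resprod N (\<lambda>k. Th k t) (n - 1))) (at t within S)"
  using assms
proof (induction j)
  case 0
  then show ?case by simp
next
  case (Suc j)
  let ?F = "\<lambda>t. mat 1 + (1 / real N) *\<^sub>R Th (Suc j) t"
  let ?D = "\<lambda>j n. resprod N (\<lambda>k. Th (n + k) t) (j - n) ** ((1 / real N) *\<^sub>R Th' n)
      ** resprod N (\<lambda>k. Th k t) (n - 1)"
  have "(?F has_vector_derivative (1 / real N) *\<^sub>R Th' (Suc j)) (at t within S)"
    using Suc.prems[of "Suc j"] by (auto intro!: derivative_eq_intros)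
  from bounded_bilinear.has_vector_derivative[OF bounded_bilinear_matrix_mult this Suc.IH]
  have "((\<lambda>t. ?F t ** resprod N (\<lambda>k. Th k t) j) has_vector_derivative
      ?F t ** (\<Sum>n=1..j. ?D j n) + ((1 / real N) *\<^sub>R Th' (Suc j)) ** resprod N (\<lambda>k. Th k t) j)
      (at t within S)"
    using Suc.prems by simp
  moreover have "?F t ** ?D j n = ?D (Suc j) n" if "n \<in> {1..j}" for n
    using that by (simp add: Suc_diff_le matrix_mul_assoc)
  then have "?F t ** (\<Sum>n=1..j. ?D j n) = (\<Sum>n=1..j. ?D (Suc j) n)"
    by (simp add: bounded_bilinear.sum_right[OF bounded_bilinear_matrix_mult])
  ultimately show ?case by (simp add: add.commute)
qed

lemma lossL_has_real_derivative:
  fixes Th :: "nat \<Rightarrow> real \<Rightarrow> 'n::finite mat"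
  assumes sym: "transpose Sig = Sig"
    and "\<And>k. 1 \<le> k \<Longrightarrow> k \<le> N \<Longrightarrow> (Th k has_vector_derivative Th' k) (at t within S)"
  shows "((\<lambda>t. lossL Sig B N (\<lambda>k. Th k t)) has_real_derivative
      (\<Sum>n=1..N. loss_grad Sig B N (\<lambda>k. Th k t) n \<bullet> Th' n)) (at t within S)"
proof -
  let ?D = "\<Sum>n=1..N. resprod N (\<lambda>k. Th (n + k) t) (N - n) ** ((1 / real N) *\<^sub>R Th' n)
      ** resprod N (\<lambda>k. Th k t) (n - 1)"
  define Y where "Y t = resprod N (\<lambda>k. Th k t) N - B" for t
  have "(Y has_derivative (\<lambda>h. h *\<^sub>R ?D)) (at t within S)"
    using resprod_has_vector_derivative[of N Th Th' t S N] assms(2)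
    unfolding Y_def has_vector_derivative_def[symmetric] by (simp add: has_vector_derivative_diff_const)
  from has_derivative_weighted_square[OF sym this]
  have "((\<lambda>t. Y t \<bullet> (Y t ** Sig)) has_real_derivative 2 * ((Y t ** Sig) \<bullet> ?D)) (at t within S)"
    unfolding has_field_derivative_def by (rule has_derivative_eq_rhs) (auto simp: fun_eq_iff)
  moreover have "2 * ((Y t ** Sig) \<bullet> ?D) = (\<Sum>n=1..N. loss_grad Sig B N (\<lambda>k. Th k t) n \<bullet> Th' n)"
    by (simp add: inner_sum_right sum_distrib_left inner_sandwich loss_grad_def residual_weight_def
        Y_def matrix_scaleR_left matrix_scaleR_right)
  ultimately show ?thesis by (simp add: lossL_eq_inner residual_weight_def Y_def)
qed

lemma residual_weight_bounds:
  fixes Sig B :: "'n::finite mat"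
  assumes sym: "transpose Sig = Sig" and posdef: "\<forall>x. x \<noteq> 0 \<longrightarrow> x \<bullet> (Sig *v x) > 0"
    and M_max: "\<forall>lam. is_eigenvalue Sig lam \<longrightarrow> lam \<le> M"
    and m_min: "\<forall>lam. is_eigenvalue Sig lam \<longrightarrow> m \<le> lam"
  shows "(norm (residual_weight Sig B N th))^2 \<le> M * lossL Sig B N th"
    and "m * lossL Sig B N th \<le> (norm (residual_weight Sig B N th))^2"
    and "0 \<le> lossL Sig B N th"
proof -
  let ?E = "resprod N th N - B"
  have row: "residual_weight Sig B N th $ i = Sig *v (?E $ i)" for i
    using sym by (simp add: residual_weight_def row_matrix_mult del: transpose_matrix_vector)
  have W: "(norm (residual_weight Sig B N th))^2 = (\<Sum>i\<in>UNIV. (norm (Sig *v (?E $ i)))^2)"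
    by (simp add: norm_vec_sq[of "residual_weight Sig B N th"] row)
  have L: "lossL Sig B N th = (\<Sum>i\<in>UNIV. ?E $ i \<bullet> (Sig *v (?E $ i)))"
    by (simp add: lossL_eq_inner inner_vec_def[of ?E] row)
  show "(norm (residual_weight Sig B N th))^2 \<le> M * lossL Sig B N th"
    unfolding W L sum_distrib_left
    by (rule sum_mono) (rule quadratic_form_eigenvalue_bounds(1)[OF sym posdef M_max m_min])
  show "m * lossL Sig B N th \<le> (norm (residual_weight Sig B N th))^2"
    unfolding W L sum_distrib_left
    by (rule sum_mono) (rule quadratic_form_eigenvalue_bounds(2)[OF sym posdef M_max m_min])
  show "0 \<le> lossL Sig B N th"
    unfolding L using posdef by (intro sum_nonneg) (metis inner_zero_left less_imp_le order_refl)
qed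

section \<open>Products of near-identity factors\<close>

lemma specnorm_mat_1_add_le: "specnorm (mat 1 + Y) \<le> 1 + specnorm (Y::'n::finite mat)"
proof -
  have "specnorm (mat 1 :: 'n mat) \<le> 1" by (rule specnorm_mat_1_le)
  then show ?thesis using specnorm_add_le[of "mat 1" Y] by linarith
qed

lemma norm_mat_1_add_mult_vec_ge: "(1 - specnorm Y) * norm v \<le> norm ((mat 1 + Y) *v v)"
  using norm_triangle_ineq2[of v "- (Y *v v)"] norm_mult_vec_le_specnorm[of Y v]
  by (simp add: matrix_vector_mult_add_rdistrib left_diff_distrib)

context
  fixes N :: nat and th :: "nat \<Rightarrow> 'n::finite mat" and r :: real
  assumes r: "0 \<le> r" "r \<le> 1"
begin

lemma specnorm_resprod_le:
  "(\<And>k. 1 \<le> k \<Longrightarrow> k \<le> j \<Longrightarrow> specnorm ((1 / real N) *\<^sub>R th k) \<le> r) \<Longrightarrow>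
    specnorm (resprod N th j) \<le> (1 + r)^j"
proof (induction j)
  case (Suc j)
  let ?Y = "(1 / real N) *\<^sub>R th (Suc j)"
  have "specnorm (mat 1 + ?Y) \<le> 1 + r"
    using specnorm_mat_1_add_le[of ?Y] Suc.prems[of "Suc j"] by simp
  moreover have "specnorm (resprod N th j) \<le> (1 + r)^j"
    using Suc by simp
  ultimately have "specnorm (mat 1 + ?Y) * specnorm (resprod N th j) \<le> (1 + r) * (1 + r)^j"
    using r by (simp add: mult_mono specnorm_nonneg)
  then show ?case
    using specnorm_mult_le[of "mat 1 + ?Y" "resprod N th j"] by simp
qed (simp add: specnorm_mat_1_le)

lemma norm_resprod_mult_vec_ge:
  "(\<And>k. 1 \<le> k \<Longrightarrow> k \<le> j \<Longrightarrow> specnorm ((1 / real N) *\<^sub>R th k) \<le> r) \<Longrightarrow>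
    (1 - r)^j * norm v \<le> norm (resprod N th j *v v)"
proof (induction j arbitrary: v)
  case (Suc j)
  let ?Y = "(1 / real N) *\<^sub>R th (Suc j)"
  have "1 - r \<le> 1 - specnorm ?Y" using Suc.prems[of "Suc j"] by simp
  moreover have "(1 - r)^j * norm v \<le> norm (resprod N th j *v v)" using Suc by simp
  ultimately have "(1 - r) * ((1 - r)^j * norm v) \<le> (1 - specnorm ?Y) * norm (resprod N th j *v v)"
    using r by (simp add: mult_mono)
  also have "\<dots> \<le> norm (resprod N th (Suc j) *v v)"
    using norm_mat_1_add_mult_vec_ge[of ?Y] by (simp add: matrix_vector_mul_assoc[symmetric])
  finally show ?case by (simp add: mult.assoc)
qed simp

lemma norm_transpose_resprod_mult_vec_ge:
  "(\<And>k. 1 \<le> k \<Longrightarrow> k \<le> j \<Longrightarrow> specnorm ((1 / real N) *\<^sub>R th k) \<le> r) \<Longrightarrow>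
    (1 - r)^j * norm v \<le> norm (transpose (resprod N th j) *v v)"
proof (induction j arbitrary: v)
  case (Suc j)
  let ?Y = "transpose ((1 / real N) *\<^sub>R th (Suc j))"
  have "1 - r \<le> 1 - specnorm ?Y" using Suc.prems[of "Suc j"] by (simp add: specnorm_transpose)
  then have "(1 - r) * norm v \<le> norm ((mat 1 + ?Y) *v v)"
    using norm_mat_1_add_mult_vec_ge[of ?Y v] mult_right_mono[of "1 - r" "1 - specnorm ?Y" "norm v"]
    by simp
  then have "(1 - r)^j * ((1 - r) * norm v) \<le> (1 - r)^j * norm ((mat 1 + ?Y) *v v)"
    using r by (simp add: mult_left_mono)
  also have "\<dots> \<le> norm (transpose (resprod N th (Suc j)) *v v)"
    using Suc by (simp add: matrix_transpose_mul transpose_mat_1_add matrix_vector_mul_assoc[symmetric])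
  finally show ?case by (simp add: mult_ac)
qed simp

end


lemma one_plus_power_le_exp: "0 \<le> x \<Longrightarrow> (1 + x)^j \<le> exp (real j * x)"
  unfolding exp_of_nat_mult by (rule power_mono) (simp_all add: add.commute)

lemma exp_le_one_minus_power:
  assumes "0 \<le> x" "x < 1"
  shows "exp (- (real j * x / (1 - x))) \<le> (1 - x)^j"
proof -
  have "1 / (1 - x) \<le> exp (x / (1 - x))"
    using exp_ge_add_one_self[of "x / (1 - x)"] assms by (simp add: field_simps)
  then have "exp (- (x / (1 - x))) \<le> 1 - x"
    using assms by (simp add: exp_minus field_simps)
  then have "exp (- (x / (1 - x)))^j \<le> (1 - x)^j"
    by (rule power_mono) simp
  moreover have "exp (- (real j * x / (1 - x))) = exp (- (x / (1 - x)))^j"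
    by (subst exp_of_nat_mult[symmetric]) simp
  ultimately show ?thesis by simp
qed

lemma norm_sandwich_le:
  fixes A W C :: "'n::finite mat"
  shows "norm (transpose A ** W ** transpose C) \<le> specnorm A * specnorm C * norm W"
proof -
  have "norm (transpose A ** W ** transpose C) \<le> specnorm A * norm W * specnorm C"
    using norm_matrix_mult_right_le[of "transpose A ** W" "transpose C"]
      norm_matrix_mult_left_le[of "transpose A" W] specnorm_nonneg[of C]
    by (simp add: specnorm_transpose) (meson mult_right_mono order_trans)
  then show ?thesis by (simp add: mult_ac)
qed

lemma norm_sandwich_ge:
  fixes A W C :: "'n::finite mat"
  assumes "0 \<le> a" "0 \<le> c"
    and "\<And>v. a * norm v \<le> norm (transpose A *v v)" and "\<And>v. c * norm v \<le> norm (C *v v)"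
  shows "a * c * norm W \<le> norm (transpose A ** W ** transpose C)"
proof -
  have "a * norm (transpose W) \<le> norm (transpose W ** transpose (transpose A))"
    by (rule norm_matrix_mult_transpose_ge) (use assms in auto)
  then have "a * norm W \<le> norm (transpose A ** W)"
    by (metis matrix_transpose_mul norm_transpose_matrix transpose_transpose)
  then have "c * (a * norm W) \<le> c * norm (transpose A ** W)"
    using assms(2) by (rule mult_left_mono)
  also have "\<dots> \<le> norm (transpose A ** W ** transpose C)"
    by (rule norm_matrix_mult_transpose_ge) (use assms in auto)
  finally show ?thesis by (simp add: mult_ac)
qed

context
  fixes N :: nat and th :: "nat \<Rightarrow> 'n::finite mat"
  assumes small: "\<forall>k\<in>{1..N}. specnorm (th k) \<le> 1/2"
begin

lemma specnorm_small_factor: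
  "1 \<le> a + k \<Longrightarrow> a + k \<le> N \<Longrightarrow> specnorm ((1 / real N) *\<^sub>R th (a + k)) \<le> 1 / (2 * real N)"
  using small divide_right_mono[of "specnorm (th (a + k))" "1/2" "real N"] by (simp add: specnorm_scaleR)

lemma norm_resprod_sandwich_le:
  assumes "a + i \<le> N" "j \<le> N" "i + j \<le> N"
  shows "norm (transpose (resprod N (\<lambda>k. th (a + k)) i) ** W ** transpose (resprod N th j))
    \<le> exp (1/2) * norm W"
proof -
  let ?r = "1 / (2 * real N)"
  have "?r \<le> 1"
  proof (cases "N = 0")
    case False
    then have "1 \<le> real N" by simp
    then show ?thesis by (simp add: field_simps)
  qed simp
  then have r: "0 \<le> ?r" "?r \<le> 1" by simp_all
  have "specnorm (resprod N (\<lambda>k. th (a + k)) i) \<le> (1 + ?r)^i"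
    by (rule specnorm_resprod_le) (use assms specnorm_small_factor r in auto)
  moreover have "specnorm (resprod N th j) \<le> (1 + ?r)^j"
    by (rule specnorm_resprod_le) (use assms specnorm_small_factor[of 0] r in auto)
  ultimately have "specnorm (resprod N (\<lambda>k. th (a + k)) i) * specnorm (resprod N th j) \<le> (1 + ?r)^(i + j)"
    by (simp add: power_add mult_mono specnorm_nonneg)
  also have "\<dots> \<le> exp (real (i + j) * ?r)" by (rule one_plus_power_le_exp) simp
  also have "\<dots> \<le> exp (1/2)" using assms by (cases "N = 0") (auto simp: field_simps)
  finally show ?thesis
    using norm_sandwich_le[of "resprod N (\<lambda>k. th (a + k)) i" W "resprod N th j"]
    by (meson mult_right_mono norm_ge_zero order_trans)
qed

lemma norm_resprod_sandwich_ge: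
  assumes "a + i \<le> N" "j \<le> N" "i + j < N"
  shows "exp (- 1/2) * norm W
    \<le> norm (transpose (resprod N (\<lambda>k. th (a + k)) i) ** W ** transpose (resprod N th j))"
proof -
  let ?r = "1 / (2 * real N)"
  have r: "0 \<le> ?r" "?r < 1" using assms by auto
  have "real (i + j) * ?r / (1 - ?r) = real (i + j) / (2 * real N - 1)"
    using assms by (auto simp: field_simps)
  also have "\<dots> \<le> 1/2" using assms by (auto simp: field_simps)
  finally have "exp (- 1/2) \<le> exp (- (real (i + j) * ?r / (1 - ?r)))" by simp
  also have "\<dots> \<le> (1 - ?r)^i * (1 - ?r)^j"
    using exp_le_one_minus_power[OF r, of "i + j"] by (simp only: power_add)
  finally have "exp (- 1/2) * norm W \<le> (1 - ?r)^i * (1 - ?r)^j * norm W"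
    by (rule mult_right_mono) simp
  also have "\<dots> \<le> norm (transpose (resprod N (\<lambda>k. th (a + k)) i) ** W ** transpose (resprod N th j))"
  proof (rule norm_sandwich_ge)
    show "(1 - ?r)^i * norm v \<le> norm (transpose (resprod N (\<lambda>k. th (a + k)) i) *v v)" for v
      using norm_transpose_resprod_mult_vec_ge[where r = ?r and th = "\<lambda>k. th (a + k)" and j = i] r assms
        specnorm_small_factor by auto
    show "(1 - ?r)^j * norm v \<le> norm (resprod N th j *v v)" for v
      using norm_resprod_mult_vec_ge[where r = ?r and th = th and j = j] r assms
        specnorm_small_factor[of 0] by auto
  qed (use r in auto)
  finally show ?thesis .
qed

lemma loss_grad_norm_le:
  assumes "1 \<le> n" "n \<le> N"
  shows "norm (loss_grad Sig B N th n) \<le> 2 / real N * exp (1/2) * norm (residual_weight Sig B N th)"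
proof -
  have "norm (transpose (resprod N (\<lambda>k. th (n + k)) (N - n)) ** residual_weight Sig B N th
      ** transpose (resprod N th (n - 1))) \<le> exp (1/2) * norm (residual_weight Sig B N th)"
    using assms by (intro norm_resprod_sandwich_le) auto
  then show ?thesis
    by (simp add: loss_grad_def, intro divide_right_mono mult_left_mono) auto
qed

lemma loss_grad_norm_ge:
  assumes "1 \<le> n" "n \<le> N"
  shows "2 / real N * exp (- 1/2) * norm (residual_weight Sig B N th) \<le> norm (loss_grad Sig B N th n)"
proof -
  have "exp (- 1/2) * norm (residual_weight Sig B N th) \<le> norm (transpose (resprod N (\<lambda>k. th (n + k)) (N - n))
      ** residual_weight Sig B N th ** transpose (resprod N th (n - 1)))"
    using assms by (intro norm_resprod_sandwich_ge) auto
  then show ?thesis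
    by (simp add: loss_grad_def, intro divide_right_mono mult_left_mono) auto
qed

lemma loss_grad_diff_norm_le:
  assumes "1 \<le> n" "n < N"
  shows "norm (loss_grad Sig B N th (n + 1) - loss_grad Sig B N th n)
    \<le> 2 / (real N)^2 * exp (1/2) * norm (residual_weight Sig B N th)"
proof -
  let ?Z = "transpose (resprod N (\<lambda>k. th (n + 1 + k)) (N - (n + 1))) ** residual_weight Sig B N th
    ** transpose (resprod N th (n - 1))"
  have "specnorm (th n) \<le> 1/2" "specnorm (th (n + 1)) \<le> 1/2" using small assms by auto
  then have "specnorm (th n) + specnorm (th (n + 1)) \<le> 1" by simp
  then have "norm (?Z ** transpose (th n) - transpose (th (n + 1)) ** ?Z) \<le> norm ?Z"
    using norm_mult_transpose_diff_le[of ?Z "th n" "th (n + 1)"] mult_right_mono[of _ 1 "norm ?Z"]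
    by fastforce
  also have "\<dots> \<le> exp (1/2) * norm (residual_weight Sig B N th)"
    using assms by (intro norm_resprod_sandwich_le) auto
  finally have "2 / (real N)^2 * norm (?Z ** transpose (th n) - transpose (th (n + 1)) ** ?Z)
      \<le> 2 / (real N)^2 * (exp (1/2) * norm (residual_weight Sig B N th))"
    by (rule mult_left_mono) simp
  then show ?thesis
    using loss_grad_Suc_diff[OF assms, where th = th and Sig = Sig and B = B] by (simp add: mult.assoc)
qed

end

section \<open>Comparison arguments in time\<close>

lemma exp_decay_of_differential_inequality:
  fixes f f' :: "real \<Rightarrow> real"
  assumes cont: "continuous_on {0..T} f"
    and deriv: "\<And>t. 0 < t \<Longrightarrow> t < T \<Longrightarrow> (f has_real_derivative f' t) (at t)"
    and ineq: "\<And>t. 0 < t \<Longrightarrow> t < T \<Longrightarrow> f' t \<le> - \<kappa> * f t"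
    and t: "0 \<le> t" "t \<le> T"
  shows "f t \<le> f 0 * exp (- \<kappa> * t)"
proof -
  let ?g = "\<lambda>s. f s * exp (\<kappa> * s)"
  have "?g t \<le> ?g 0"
  proof (rule DERIV_nonpos_imp_decreasing_open[OF t(1)])
    fix s assume s: "0 < s" "s < t"
    have "(?g has_real_derivative f' s * exp (\<kappa> * s) + f s * (exp (\<kappa> * s) * \<kappa>)) (at s)"
      using deriv s t by (auto intro!: derivative_eq_intros)
    moreover have "f' s * exp (\<kappa> * s) + f s * (exp (\<kappa> * s) * \<kappa>) \<le> 0"
      using mult_nonpos_nonneg[of "f' s + \<kappa> * f s" "exp (\<kappa> * s)"] ineq[of s] s t
      by (simp add: algebra_simps)
    ultimately show "\<exists>y. (?g has_real_derivative y) (at s) \<and> y \<le> 0" by blast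
  next
    show "continuous_on {0..t} ?g"
      using t by (intro continuous_intros continuous_on_subset[OF cont]) auto
  qed
  then show ?thesis by (simp add: exp_minus field_simps)
qed

lemma norm_diff_le_of_exp_derivative_bound:
  fixes f :: "real \<Rightarrow> 'a::real_normed_vector"
  assumes "a \<le> b" "\<beta> > 0" and cont: "continuous_on {a..b} f"
    and deriv: "\<And>x. a < x \<Longrightarrow> x < b \<Longrightarrow> (f has_vector_derivative f' x) (at x)"
    and bound: "\<And>x. a < x \<Longrightarrow> x < b \<Longrightarrow> norm (f' x) \<le> c * exp (- \<beta> * x)"
  shows "norm (f b - f a) \<le> c / \<beta> * (exp (- \<beta> * a) - exp (- \<beta> * b))"
proof (cases "a = b")
  case False
  define \<phi> where "\<phi> x = - (c / \<beta>) * exp (- \<beta> * x)" for x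
  have "(\<phi> has_vector_derivative c * exp (- \<beta> * x)) (at x)" for x
    using \<open>\<beta> > 0\<close> unfolding \<phi>_def has_real_derivative_iff_has_vector_derivative[symmetric]
    by (auto intro!: derivative_eq_intros)
  moreover have "continuous_on {a..b} \<phi>" unfolding \<phi>_def by (intro continuous_intros)
  ultimately have "norm (f b - f a) \<le> \<phi> b - \<phi> a"
    using False assms by (intro differentiable_bound_general[OF _ cont]) auto
  then show ?thesis by (simp add: \<phi>_def algebra_simps)
qed simp

lemma convergent_at_top_of_exp_Cauchy:
  fixes f :: "real \<Rightarrow> 'a::banach"
  assumes "c > 0" and Cauchy: "\<And>a b. 0 \<le> a \<Longrightarrow> a \<le> b \<Longrightarrow> norm (f b - f a) \<le> K * exp (- c * a)"
  shows "\<exists>L. (f \<longlongrightarrow> L) at_top"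
proof -
  have "((\<lambda>a. K * exp (- c * a)) \<longlongrightarrow> 0) at_top"
    using \<open>c > 0\<close> by real_asymp
  have "cauchy_filter (filtermap f at_top)"
  proof (unfold cauchy_filter_metric_filtermap, intro allI impI)
    fix e :: real assume "e > 0"
    then obtain A where A: "\<And>a. a \<ge> A \<Longrightarrow> K * exp (- c * a) < e"
      using order_tendstoD(2)[OF \<open>((\<lambda>a. K * exp (- c * a)) \<longlongrightarrow> 0) at_top\<close>]
      by (auto simp: eventually_at_top_linorder)
    have "dist (f x) (f y) < e" if "max A 0 \<le> x" "max A 0 \<le> y" for x y
      using Cauchy[of x y] Cauchy[of y x] A[of x] A[of y] that
      by (cases "x \<le> y") (auto simp: dist_norm norm_minus_commute)
    then show "\<exists>P. eventually P at_top \<and> (\<forall>x y. P x \<and> P y \<longrightarrow> dist (f x) (f y) < e)"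
      using eventually_ge_at_top[of "max A 0"] by blast
  qed
  then show ?thesis
    using cauchy_filter_convergent by (auto simp: convergent_filter_iff filterlim_def)
qed

lemma continuity_argument:
  fixes g :: "'i \<Rightarrow> real \<Rightarrow> real"
  assumes "finite I" and cont: "\<And>i. i \<in> I \<Longrightarrow> continuous_on {0..} (g i)"
    and init: "\<And>i. i \<in> I \<Longrightarrow> g i 0 < c"
    and step: "\<And>T i. 0 < T \<Longrightarrow> i \<in> I \<Longrightarrow> (\<And>s j. 0 < s \<Longrightarrow> s < T \<Longrightarrow> j \<in> I \<Longrightarrow> g j s \<le> c) \<Longrightarrow> g i T < c"
    and "i \<in> I" "0 \<le> t"
  shows "g i t < c"
proof (rule ccontr)
  define A where "A = (\<Union>j\<in>I. {s \<in> {0..}. c \<le> g j s})"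
  assume "\<not> g i t < c"
  then have "t \<in> A" using \<open>i \<in> I\<close> \<open>0 \<le> t\<close> by (force simp: A_def)
  moreover have "closed A"
    unfolding A_def using \<open>finite I\<close> cont
    by (intro closed_UN ballI continuous_on_closed_Collect_le continuous_on_const) auto
  moreover have bdd: "bdd_below A" by (auto simp: A_def intro: bdd_belowI[of _ 0])
  ultimately have "Inf A \<in> A" by (intro closed_contains_Inf) auto
  then obtain j where j: "j \<in> I" "0 \<le> Inf A" "c \<le> g j (Inf A)" by (auto simp: A_def)
  have "Inf A \<noteq> 0" using init[OF j(1)] j(3) by auto
  moreover have "g k s \<le> c" if "0 < s" "s < Inf A" "k \<in> I" for s k
    using cInf_lower[OF _ bdd, of s] that by (force simp: A_def)
  ultimately have "g j (Inf A) < c" using j by (intro step) auto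
  with j show False by simp
qed

section \<open>The rescaled gradient flow\<close>

lemma is_gradient_unique: "is_gradient f x g \<Longrightarrow> is_gradient f x g' \<Longrightarrow> g = g'"
  unfolding is_gradient_def
  by (drule (1) has_derivative_unique) (metis inner_diff_left inner_eq_zero_iff right_minus_eq)

locale deep_linear_flow =
  fixes Sig B :: "'n::finite mat" and M m :: real and N :: nat
    and th :: "nat \<Rightarrow> real \<Rightarrow> 'n mat"
  assumes sym: "transpose Sig = Sig"
    and posdef: "\<forall>x. x \<noteq> 0 \<longrightarrow> x \<bullet> (Sig *v x) > 0"
    and M_max: "\<forall>lam. is_eigenvalue Sig lam \<longrightarrow> lam \<le> M"
    and m_min: "\<forall>lam. is_eigenvalue Sig lam \<longrightarrow> m \<le> lam"
    and M_pos: "M > 0" and m_pos: "m > 0" and N_pos: "N \<ge> 1"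
    and gradient_flow: "\<And>n t. n \<in> {1..N} \<Longrightarrow> t \<ge> 0 \<Longrightarrow> \<exists>g.
       is_gradient (\<lambda>X. lossL Sig B N ((\<lambda>k. th k t)(n := X))) (th n t) g \<and>
       (th n has_vector_derivative (- real N *\<^sub>R g)) (at t within {0..})"
    and init_loss: "sqrt (lossL Sig B N (\<lambda>k. th k 0)) < m / (4 * sqrt (2 * M * exp 3))"
    and init_norm: "\<And>n. n \<in> {1..N} \<Longrightarrow> specnorm (th n 0) \<le> 1/4"
begin

definition loss :: "real \<Rightarrow> real" where
  "loss t = lossL Sig B N (\<lambda>k. th k t)"

definition rate :: real where
  "rate = 4 * m / exp 1"

text \<open>The integral over all times t \<ge> 0 of the speed bound 2 e^(1/2) sqrt(M L(0)) exp(-rate t/2).\<close>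

definition travel_bound :: real where
  "travel_bound = exp (3/2) * sqrt (M * loss 0) / m"

lemma loss_nonneg: "0 \<le> loss t"
  unfolding loss_def by (rule residual_weight_bounds(3)[OF sym posdef M_max m_min])

lemma rate_pos: "rate > 0"
  using m_pos by (simp add: rate_def)

lemma travel_bound_nonneg: "0 \<le> travel_bound"
  using m_pos M_pos loss_nonneg[of 0] by (simp add: travel_bound_def)

lemma travel_bound_lt: "travel_bound < 1/4"
proof -
  have "exp 3 = exp (3/2) * exp (3/2::real)" by (simp flip: exp_add)
  then have "sqrt (2 * M * exp 3) = sqrt 2 * sqrt M * exp (3/2)"
    by (simp add: real_sqrt_mult)
  then have "sqrt (loss 0) * (4 * sqrt 2 * sqrt M * exp (3/2)) < m"
    using init_loss M_pos by (simp add: loss_def pos_less_divide_eq mult_ac)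
  moreover have "sqrt (loss 0) * (4 * sqrt M * exp (3/2)) \<le> sqrt (loss 0) * (4 * sqrt 2 * sqrt M * exp (3/2))"
    using M_pos loss_nonneg[of 0] by (intro mult_left_mono) auto
  ultimately show ?thesis
    using m_pos by (simp add: travel_bound_def real_sqrt_mult pos_divide_less_eq mult_ac)
qed

lemma rate_travel_bound: "rate / 2 * travel_bound = 2 * exp (1/2) * sqrt (M * loss 0)"
proof -
  have "exp (3/2) = exp 1 * exp (1/2::real)" by (simp flip: exp_add)
  then show ?thesis using m_pos by (simp add: rate_def travel_bound_def)
qed

lemma th_has_vector_derivative_within:
  assumes "n \<in> {1..N}" "t \<ge> 0"
  shows "(th n has_vector_derivative (- real N *\<^sub>R loss_grad Sig B N (\<lambda>k. th k t) n)) (at t within {0..})"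
proof -
  obtain g where "is_gradient (\<lambda>X. lossL Sig B N ((\<lambda>k. th k t)(n := X))) (th n t) g"
    and "(th n has_vector_derivative - real N *\<^sub>R g) (at t within {0..})"
    using gradient_flow[OF assms] by blast
  moreover have "is_gradient (\<lambda>X. lossL Sig B N ((\<lambda>k. th k t)(n := X))) (th n t)
      (loss_grad Sig B N (\<lambda>k. th k t) n)"
    using is_gradient_loss_grad[OF sym, where th = "\<lambda>k. th k t"] assms by simp
  ultimately show ?thesis using is_gradient_unique by metis
qed

lemma th_continuous_on: "n \<in> {1..N} \<Longrightarrow> continuous_on {0..} (th n)"
  using th_has_vector_derivative_within has_vector_derivative_continuous by (fastforce simp: continuous_on_eq_continuous_within)

lemma th_has_vector_derivative:
  "n \<in> {1..N} \<Longrightarrow> t > 0 \<Longrightarrow>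
    (th n has_vector_derivative (- real N *\<^sub>R loss_grad Sig B N (\<lambda>k. th k t) n)) (at t)"
  using th_has_vector_derivative_within[of n t] at_within_interior[of t "{0..}"] by simp

lemma loss_has_real_derivative:
  assumes "t \<ge> 0"
  shows "(loss has_real_derivative - real N * (\<Sum>n=1..N. (norm (loss_grad Sig B N (\<lambda>k. th k t) n))^2))
    (at t within {0..})"
proof -
  have "(loss has_real_derivative
      (\<Sum>n=1..N. loss_grad Sig B N (\<lambda>k. th k t) n \<bullet> (- real N *\<^sub>R loss_grad Sig B N (\<lambda>k. th k t) n)))
      (at t within {0..})"
    unfolding loss_def[abs_def] by (rule lossL_has_real_derivative[OF sym]) (use th_has_vector_derivative_within assms in auto)
  then show ?thesis
    by (simp add: power2_norm_eq_inner sum_distrib_left sum_negf)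
qed

lemma loss_continuous_on: "continuous_on {0..} loss"
  using loss_has_real_derivative DERIV_continuous
  by (fastforce simp: continuous_on_eq_continuous_within)

lemma gradient_domination:
  assumes small: "\<forall>k\<in>{1..N}. specnorm (th k t) \<le> 1/2"
  shows "rate * loss t \<le> real N * (\<Sum>n=1..N. (norm (loss_grad Sig B N (\<lambda>k. th k t) n))^2)"
proof -
  let ?W = "residual_weight Sig B N (\<lambda>k. th k t)"
  have exp_sq: "exp (- 1/2)^2 = 1 / exp (1::real)"
    by (simp add: power2_eq_square exp_minus inverse_eq_divide flip: exp_add)
  have each: "4 / (real N)^2 / exp 1 * (m * loss t) \<le> (norm (loss_grad Sig B N (\<lambda>k. th k t) n))^2"
    if "n \<in> {1..N}" for n
  proof -
    have "m * loss t \<le> (norm ?W)^2"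
      unfolding loss_def by (rule residual_weight_bounds(2)[OF sym posdef M_max m_min])
    then have "4 / (real N)^2 / exp 1 * (m * loss t) \<le> 4 / (real N)^2 / exp 1 * (norm ?W)^2"
      by (rule mult_left_mono) simp
    also have "\<dots> = (2 / real N * exp (- 1/2) * norm ?W)^2"
      using exp_sq by (simp add: power_mult_distrib power_divide)
    also have "\<dots> \<le> (norm (loss_grad Sig B N (\<lambda>k. th k t) n))^2"
      using loss_grad_norm_ge[OF small, of n] that by (intro power_mono) auto
    finally show ?thesis .
  qed
  have "rate * loss t = real N * (real N * (4 / (real N)^2 / exp 1 * (m * loss t)))"
    using N_pos by (simp add: rate_def power2_eq_square)
  also have "\<dots> \<le> real N * (\<Sum>n=1..N. (norm (loss_grad Sig B N (\<lambda>k. th k t) n))^2)"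
    using sum_mono[of "{1..N}", OF each] by (intro mult_left_mono) auto
  finally show ?thesis .
qed

lemma loss_decay:
  assumes small: "\<And>s. 0 < s \<Longrightarrow> s < T \<Longrightarrow> \<forall>k\<in>{1..N}. specnorm (th k s) \<le> 1/2"
    and "0 \<le> t" "t \<le> T"
  shows "loss t \<le> loss 0 * exp (- rate * t)"
proof (rule exp_decay_of_differential_inequality[OF _ _ _ assms(2,3)])
  show "continuous_on {0..T} loss"
    by (rule continuous_on_subset[OF loss_continuous_on]) auto
  fix s assume s: "0 < s" "s < T"
  show "(loss has_real_derivative - real N * (\<Sum>n=1..N. (norm (loss_grad Sig B N (\<lambda>k. th k s) n))^2)) (at s)"
    using loss_has_real_derivative[of s] at_within_interior[of s "{0..}"] s by simp
  show "- real N * (\<Sum>n=1..N. (norm (loss_grad Sig B N (\<lambda>k. th k s) n))^2) \<le> - rate * loss s"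
    using gradient_domination[OF small[OF s]] by simp
qed

lemma sqrt_loss_decay:
  assumes "loss t \<le> loss 0 * exp (- rate * t)"
  shows "sqrt (M * loss t) \<le> sqrt (M * loss 0) * exp (- (rate / 2) * t)"
proof -
  have "exp (- rate * t) = exp (- (rate / 2) * t) * exp (- (rate / 2) * t)"
    by (simp flip: exp_add)
  then have "sqrt (M * (loss 0 * exp (- rate * t))) = sqrt (M * loss 0) * exp (- (rate / 2) * t)"
    by (simp add: real_sqrt_mult mult.assoc)
  then show ?thesis
    using assms M_pos by (metis mult_left_mono less_imp_le real_sqrt_le_iff)
qed

lemma norm_residual_weight_le: "norm (residual_weight Sig B N (\<lambda>k. th k t)) \<le> sqrt (M * loss t)"
  unfolding loss_def by (rule real_le_rsqrt) (rule residual_weight_bounds(1)[OF sym posdef M_max m_min])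

lemma speed_le:
  assumes small: "\<forall>k\<in>{1..N}. specnorm (th k t) \<le> 1/2" and decay: "loss t \<le> loss 0 * exp (- rate * t)"
    and n: "n \<in> {1..N}"
  shows "norm (- real N *\<^sub>R loss_grad Sig B N (\<lambda>k. th k t) n) \<le> rate / 2 * travel_bound * exp (- (rate / 2) * t)"
proof -
  have "norm (- real N *\<^sub>R loss_grad Sig B N (\<lambda>k. th k t) n)
      = real N * norm (loss_grad Sig B N (\<lambda>k. th k t) n)"
    by simp
  also have "\<dots> \<le> real N * (2 / real N * exp (1/2) * norm (residual_weight Sig B N (\<lambda>k. th k t)))"
    using loss_grad_norm_le[OF small, of n] n by (intro mult_left_mono) auto
  also have "\<dots> \<le> 2 * exp (1/2) * sqrt (M * loss t)"
    using N_pos norm_residual_weight_le[of t] by simp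
  also have "\<dots> \<le> 2 * exp (1/2) * (sqrt (M * loss 0) * exp (- (rate / 2) * t))"
    using sqrt_loss_decay[OF decay] by simp
  finally show ?thesis unfolding rate_travel_bound by (simp add: mult_ac)
qed

lemma relative_speed_le:
  assumes small: "\<forall>k\<in>{1..N}. specnorm (th k t) \<le> 1/2" and decay: "loss t \<le> loss 0 * exp (- rate * t)"
    and n: "1 \<le> n" "n < N"
  shows "norm (- real N *\<^sub>R loss_grad Sig B N (\<lambda>k. th k t) (n + 1) - - real N *\<^sub>R loss_grad Sig B N (\<lambda>k. th k t) n)
    \<le> rate / 2 * travel_bound / real N * exp (- (rate / 2) * t)"
proof -
  have "norm (- real N *\<^sub>R loss_grad Sig B N (\<lambda>k. th k t) (n + 1) - - real N *\<^sub>R loss_grad Sig B N (\<lambda>k. th k t) n)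
      = real N * norm (loss_grad Sig B N (\<lambda>k. th k t) (n + 1) - loss_grad Sig B N (\<lambda>k. th k t) n)"
    by (simp add: norm_minus_commute flip: scaleR_diff_right)
  also have "\<dots> \<le> real N * (2 / (real N)^2 * exp (1/2) * norm (residual_weight Sig B N (\<lambda>k. th k t)))"
    using loss_grad_diff_norm_le[OF small n] by (intro mult_left_mono) auto
  also have "\<dots> \<le> 2 * exp (1/2) * sqrt (M * loss t) / real N"
    using N_pos norm_residual_weight_le[of t] by (simp add: power2_eq_square divide_right_mono)
  also have "\<dots> \<le> 2 * exp (1/2) * (sqrt (M * loss 0) * exp (- (rate / 2) * t)) / real N"
    using sqrt_loss_decay[OF decay] by (simp add: divide_right_mono)
  finally show ?thesis unfolding rate_travel_bound by (simp add: mult_ac)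
qed

lemma displacement_le:
  assumes small: "\<And>s. 0 < s \<Longrightarrow> s < T \<Longrightarrow> \<forall>k\<in>{1..N}. specnorm (th k s) \<le> 1/2"
    and n: "n \<in> {1..N}" and "0 \<le> a" "a \<le> b" "b \<le> T"
  shows "norm (th n b - th n a) \<le> travel_bound * (exp (- (rate / 2) * a) - exp (- (rate / 2) * b))"
proof -
  have "norm (th n b - th n a) \<le> rate / 2 * travel_bound / (rate / 2) * (exp (- (rate / 2) * a) - exp (- (rate / 2) * b))"
  proof (rule norm_diff_le_of_exp_derivative_bound)
    show "continuous_on {a..b} (th n)"
      using assms by (intro continuous_on_subset[OF th_continuous_on[OF n]]) auto
    fix x assume x: "a < x" "x < b"
    show "(th n has_vector_derivative - real N *\<^sub>R loss_grad Sig B N (\<lambda>k. th k x) n) (at x)"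
      using assms x by (intro th_has_vector_derivative) auto
    show "norm (- real N *\<^sub>R loss_grad Sig B N (\<lambda>k. th k x) n) \<le> rate / 2 * travel_bound * exp (- (rate / 2) * x)"
      using assms x by (intro speed_le small loss_decay[of T]) auto
  qed (use assms rate_pos in auto)
  then show ?thesis using rate_pos by simp
qed

lemma specnorm_th_lt_half:
  assumes "n \<in> {1..N}" "0 \<le> t"
  shows "specnorm (th n t) < 1/2"
proof (rule continuity_argument[where g = "\<lambda>n t. specnorm (th n t)", OF _ _ _ _ assms])
  show "continuous_on {0..} (\<lambda>t. specnorm (th n t))" if "n \<in> {1..N}" for n
    using th_continuous_on[OF that] by (rule continuous_on_specnorm)
  show "specnorm (th n 0) < 1/2" if "n \<in> {1..N}" for n
    using init_norm[OF that] by simp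
  fix T i
  assume T: "0 < T" and i: "i \<in> {1..N}"
    and small: "\<And>s j. 0 < s \<Longrightarrow> s < T \<Longrightarrow> j \<in> {1..N} \<Longrightarrow> specnorm (th j s) \<le> 1/2"
  have "norm (th i T - th i 0) \<le> travel_bound * (exp (- (rate / 2) * 0) - exp (- (rate / 2) * T))"
    using small T i by (intro displacement_le) auto
  also have "\<dots> \<le> travel_bound" using travel_bound_nonneg by (simp add: mult_left_le)
  finally have "specnorm (th i T - th i 0) < 1/4"
    using specnorm_le_norm[of "th i T - th i 0"] travel_bound_lt by linarith
  then show "specnorm (th i T) < 1/2"
    using specnorm_add_le[of "th i 0" "th i T - th i 0"] init_norm[OF i] by simp
qed simp

lemma specnorm_th_le_half: "0 \<le> t \<Longrightarrow> \<forall>k\<in>{1..N}. specnorm (th k t) \<le> 1/2"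
  using specnorm_th_lt_half by (simp add: less_imp_le)

lemma th_convergent:
  assumes n: "n \<in> {1..N}"
  shows "\<exists>L. (th n \<longlongrightarrow> L) at_top"
proof (rule convergent_at_top_of_exp_Cauchy)
  show "rate / 2 > 0" using rate_pos by simp
  fix a b :: real assume ab: "0 \<le> a" "a \<le> b"
  have "norm (th n b - th n a) \<le> travel_bound * (exp (- (rate / 2) * a) - exp (- (rate / 2) * b))"
    using specnorm_th_le_half ab n by (intro displacement_le[where T = b]) auto
  also have "\<dots> \<le> travel_bound * exp (- (rate / 2) * a)"
    using travel_bound_nonneg by (simp add: mult_left_mono)
  finally show "norm (th n b - th n a) \<le> travel_bound * exp (- (rate / 2) * a)" .
qed

lemma neighbour_difference_le:
  assumes n: "1 \<le> n" "n < N" and "0 \<le> t"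
  shows "specnorm (th (n + 1) t - th n t) \<le> specnorm (th (n + 1) 0 - th n 0) + travel_bound / real N"
proof -
  let ?D = "\<lambda>t. th (n + 1) t - th n t"
  have n': "n \<in> {1..N}" "n + 1 \<in> {1..N}" using n by auto
  have "norm (?D t - ?D 0) \<le> rate / 2 * travel_bound / real N / (rate / 2) * (exp (- (rate / 2) * 0) - exp (- (rate / 2) * t))"
  proof (rule norm_diff_le_of_exp_derivative_bound)
    show "continuous_on {0..t} ?D"
      by (intro continuous_intros continuous_on_subset[OF th_continuous_on[OF n'(1)]]
          continuous_on_subset[OF th_continuous_on[OF n'(2)]]) auto
    fix x assume x: "0 < x" "x < t"
    show "(?D has_vector_derivative - real N *\<^sub>R loss_grad Sig B N (\<lambda>k. th k x) (n + 1)
        - - real N *\<^sub>R loss_grad Sig B N (\<lambda>k. th k x) n) (at x)"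
      using x n' by (intro has_vector_derivative_diff th_has_vector_derivative) auto
    show "norm (- real N *\<^sub>R loss_grad Sig B N (\<lambda>k. th k x) (n + 1) - - real N *\<^sub>R loss_grad Sig B N (\<lambda>k. th k x) n)
        \<le> rate / 2 * travel_bound / real N * exp (- (rate / 2) * x)"
      using x n specnorm_th_le_half by (intro relative_speed_le loss_decay[where T = x]) auto
  qed (use assms rate_pos in auto)
  also have "\<dots> \<le> travel_bound / real N"
    using rate_pos travel_bound_nonneg mult_left_le[of "1 - exp (- (rate / 2) * t)" travel_bound]
    by (simp add: divide_right_mono)
  finally show ?thesis
    using specnorm_add_le[of "?D 0" "?D t - ?D 0"] specnorm_le_norm[of "?D t - ?D 0"] by simp
qed

lemma neighbour_difference_le_of_init:
  assumes "1 \<le> n" "n < N" "0 \<le> t" and "specnorm (th (n + 1) 0 - th n 0) \<le> C0 / real N"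
  shows "specnorm (th (n + 1) t - th n t) \<le> (C0 + 1/4) / real N"
proof -
  have "specnorm (th (n + 1) t - th n t) \<le> C0 / real N + (1/4) / real N"
    using neighbour_difference_le[OF assms(1-3)] assms(4) travel_bound_lt divide_right_mono[of travel_bound "1/4" "real N"]
    by linarith
  then show ?thesis by (simp add: add_divide_distrib)
qed

end

theorem proposition2:
  fixes Sig B :: "real^'d::finite^'d" and M m :: real
    and \<theta> :: "nat \<Rightarrow> nat \<Rightarrow> real \<Rightarrow> real^'d^'d"
  assumes sym: "transpose Sig = Sig"
    and posdef: "\<forall>x. x \<noteq> 0 \<longrightarrow> x \<bullet> (Sig *v x) > 0"
    and M_eig: "is_eigenvalue Sig M" and M_max: "\<forall>lam. is_eigenvalue Sig lam \<longrightarrow> lam \<le> M"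
    and m_eig: "is_eigenvalue Sig m" and m_min: "\<forall>lam. is_eigenvalue Sig lam \<longrightarrow> m \<le> lam"
    and M_pos: "M > 0" and m_pos: "m > 0"
    and flow: "\<forall>N\<ge>1. \<forall>n\<in>{1..N}. \<forall>t\<ge>0. \<exists>g.
        is_gradient (\<lambda>X. lossL Sig B N ((\<lambda>k. \<theta> N k t)(n := X))) (\<theta> N n t) g \<and>
        (\<theta> N n has_vector_derivative (- real N *\<^sub>R g)) (at t within {0..})"
    and init_loss: "\<forall>N\<ge>1. sqrt (lossL Sig B N (\<lambda>k. \<theta> N k 0)) < m / (4 * sqrt (2 * M * exp 3))"
    and init_norm: "\<forall>N\<ge>1. \<forall>n\<in>{1..N}. specnorm (\<theta> N n 0) \<le> 1/4"
    and init_smooth: "\<exists>C0>0. \<forall>N\<ge>1. \<forall>n\<in>{1..N-1}.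
        specnorm (\<theta> N (n+1) 0 - \<theta> N n 0) \<le> C0 / real N"
  shows "(\<forall>N\<ge>1. \<forall>n\<in>{1..N}. \<forall>t\<ge>0. specnorm (\<theta> N n t) < 1/2)
    \<and> (\<forall>N\<ge>1. \<forall>n\<in>{1..N}. \<exists>L. (\<theta> N n \<longlongrightarrow> L) at_top)
    \<and> (\<exists>C>0. \<forall>N\<ge>1. \<forall>n\<in>{1..N-1}. \<forall>t\<ge>0.
        specnorm (\<theta> N (n+1) t - \<theta> N n t) \<le> C / real N)"
proof -
  have flow_N: "deep_linear_flow Sig B M m N (\<theta> N)" if "N \<ge> 1" for N
    by unfold_locales (use assms that in auto)
  obtain C0 where "C0 > 0" and C0: "\<forall>N\<ge>1. \<forall>n\<in>{1..N-1}. specnorm (\<theta> N (n+1) 0 - \<theta> N n 0) \<le> C0 / real N"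
    using init_smooth by blast
  have "specnorm (\<theta> N (n+1) t - \<theta> N n t) \<le> (C0 + 1/4) / real N"
    if "N \<ge> 1" "n \<in> {1..N-1}" "t \<ge> 0" for N n t
    using deep_linear_flow.neighbour_difference_le_of_init[OF flow_N[OF that(1)]] C0 that by auto
  moreover have "C0 + 1/4 > 0" using \<open>C0 > 0\<close> by simp
  ultimately show ?thesis
    using deep_linear_flow.specnorm_th_lt_half[OF flow_N] deep_linear_flow.th_convergent[OF flow_N] by blast
qed

end
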